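(* Let $P$ be a field and $W=W(X)$ the free commutative, free associative, or free Lie algebra over $P$ on a finite set $X$. Let $u\in W$ be a basic element, i.e. an element belonging to some free generating set (base) of $W$. Then $$\bigcap_{\eta\in\mathrm{End}(W),\ \eta(u)=0}\mathrm{Ker}\,\eta=\langle u\rangle,$$ where $\langle u\rangle$ is the ideal of $W$ generated by $u$.
   Context: $\mathrm{End}(W)$ denotes the set of all algebra endomorphisms of $W$. In the paper's notation this is the statement $\langle u\rangle''=\langle u\rangle$ for the Galois correspondence $T'=\{\eta\in\mathrm{End}(W): T\subset\mathrm{Ker}\,\eta\}$, $A'=\bigcap_{\eta\in A}\mathrm{Ker}\,\eta$. *)

theory Defs
  imports "HOL-Library.Poly_Mapping"
begin

(* Words over an alphabet 'v, made a monoid under concatenation, so that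
   ('v word \<Rightarrow>\<^sub>0 'a) is the free associative (unital) algebra over 'a on 'v. *)
datatype 'v word = Word (letters: "'v list")

instantiation word :: (type) monoid_add
begin
definition zero_word :: "'v word" where "zero_word = Word []"
definition plus_word :: "'v word \<Rightarrow> 'v word \<Rightarrow> 'v word"
  where "plus_word u v = Word (letters u @ letters v)"
instance
proof
  fix a b c :: "'v word"
  show "a + b + c = a + (b + c)" by (simp add: plus_word_def)
  show "0 + a = a" by (cases a) (simp add: plus_word_def zero_word_def)
  show "a + 0 = a" by (cases a) (simp add: plus_word_def zero_word_def)
qed
end

type_synonym ('a, 'x) comm_poly = "('x \<Rightarrow>\<^sub>0 nat) \<Rightarrow>\<^sub>0 'a"
type_synonym ('a, 'x) assoc_poly = "'x word \<Rightarrow>\<^sub>0 'a"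

definition smult :: "'a::semiring_0 \<Rightarrow> ('m \<Rightarrow>\<^sub>0 'a) \<Rightarrow> ('m \<Rightarrow>\<^sub>0 'a)"
  where "smult c p = Poly_Mapping.map (\<lambda>b. c * b) p"

definition avar :: "'x \<Rightarrow> ('a::zero_neq_one, 'x) assoc_poly"
  where "avar x = Poly_Mapping.single (Word [x]) 1"

definition alg_end :: "(('m::monoid_add \<Rightarrow>\<^sub>0 'a::field) \<Rightarrow> ('m \<Rightarrow>\<^sub>0 'a)) \<Rightarrow> bool" where
  "alg_end \<eta> \<longleftrightarrow> (\<forall>p q. \<eta> (p + q) = \<eta> p + \<eta> q) \<and> (\<forall>c p. \<eta> (smult c p) = smult c (\<eta> p))
     \<and> (\<forall>p q. \<eta> (p * q) = \<eta> p * \<eta> q) \<and> \<eta> 1 = 1"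

definition is_ideal :: "('m::monoid_add \<Rightarrow>\<^sub>0 'a::field) set \<Rightarrow> bool" where
  "is_ideal I \<longleftrightarrow> 0 \<in> I \<and> (\<forall>a\<in>I. \<forall>b\<in>I. a + b \<in> I) \<and> (\<forall>c. \<forall>a\<in>I. smult c a \<in> I)
     \<and> (\<forall>a\<in>I. \<forall>b. a * b \<in> I \<and> b * a \<in> I)"

definition ideal_gen :: "('m::monoid_add \<Rightarrow>\<^sub>0 'a::field) \<Rightarrow> ('m \<Rightarrow>\<^sub>0 'a) set" where
  "ideal_gen u = \<Inter>{I. is_ideal I \<and> u \<in> I}"

definition eval_comm :: "('v \<Rightarrow> ('m::comm_monoid_add \<Rightarrow>\<^sub>0 'a::field)) \<Rightarrow> (('v \<Rightarrow>\<^sub>0 nat) \<Rightarrow>\<^sub>0 'a)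
    \<Rightarrow> ('m \<Rightarrow>\<^sub>0 'a)" where
  "eval_comm \<sigma> P = (\<Sum>m\<in>Poly_Mapping.keys P. smult (Poly_Mapping.lookup P m) (\<Prod>v\<in>Poly_Mapping.keys m. \<sigma> v ^ Poly_Mapping.lookup m v))"

definition eval_assoc :: "('v \<Rightarrow> ('m::monoid_add \<Rightarrow>\<^sub>0 'a::field)) \<Rightarrow> ('v word \<Rightarrow>\<^sub>0 'a)
    \<Rightarrow> ('m \<Rightarrow>\<^sub>0 'a)" where
  "eval_assoc \<sigma> P = (\<Sum>w\<in>Poly_Mapping.keys P. smult (Poly_Mapping.lookup P w) (foldr (\<lambda>v acc. \<sigma> v * acc) (letters w) 1))"

(* B is a free generating set (base): the natural map from the free algebra on B is bijective *)
definition comm_free_gen :: "('a::field, 'x) comm_poly set \<Rightarrow> bool" where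
  "comm_free_gen B \<longleftrightarrow>
     bij_betw (eval_comm id) {P :: (('a, 'x) comm_poly, nat) poly_mapping \<Rightarrow>\<^sub>0 'a. \<forall>m\<in>Poly_Mapping.keys P. Poly_Mapping.keys m \<subseteq> B} UNIV"

definition assoc_free_gen :: "('a::field, 'x) assoc_poly set \<Rightarrow> bool" where
  "assoc_free_gen B \<longleftrightarrow>
     bij_betw (eval_assoc id) {P :: (('a, 'x) assoc_poly) word \<Rightarrow>\<^sub>0 'a. \<forall>w\<in>Poly_Mapping.keys P. set (letters w) \<subseteq> B} UNIV"

definition bracket :: "('m::monoid_add \<Rightarrow>\<^sub>0 'a::field) \<Rightarrow> ('m \<Rightarrow>\<^sub>0 'a) \<Rightarrow> ('m \<Rightarrow>\<^sub>0 'a)"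
  where "bracket p q = p * q - q * p"

inductive_set lie_closure :: "('m::monoid_add \<Rightarrow>\<^sub>0 'a::field) set \<Rightarrow> ('m \<Rightarrow>\<^sub>0 'a) set"
  for G where
    gen: "g \<in> G \<Longrightarrow> g \<in> lie_closure G"
  | zero: "0 \<in> lie_closure G"
  | add: "p \<in> lie_closure G \<Longrightarrow> q \<in> lie_closure G \<Longrightarrow> p + q \<in> lie_closure G"
  | smult: "p \<in> lie_closure G \<Longrightarrow> smult c p \<in> lie_closure G"
  | brk: "p \<in> lie_closure G \<Longrightarrow> q \<in> lie_closure G \<Longrightarrow> bracket p q \<in> lie_closure G"

(* free Lie algebra on 'x, realised as the Lie subalgebra of P<X> generated by X *)
definition free_lie :: "('a::field, 'x) assoc_poly set" where
  "free_lie = lie_closure (range avar)"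

definition lie_free_gen :: "('a::field, 'x) assoc_poly set \<Rightarrow> bool" where
  "lie_free_gen B \<longleftrightarrow> B \<subseteq> free_lie \<and>
     bij_betw (eval_assoc id) (lie_closure (avar ` B)) free_lie"

definition lie_end :: "(('a::field, 'x) assoc_poly \<Rightarrow> ('a, 'x) assoc_poly) \<Rightarrow> bool" where
  "lie_end \<eta> \<longleftrightarrow> (\<forall>p\<in>free_lie. \<eta> p \<in> free_lie)
     \<and> (\<forall>p\<in>free_lie. \<forall>q\<in>free_lie. \<eta> (p + q) = \<eta> p + \<eta> q)
     \<and> (\<forall>c. \<forall>p\<in>free_lie. \<eta> (smult c p) = smult c (\<eta> p))
     \<and> (\<forall>p\<in>free_lie. \<forall>q\<in>free_lie. \<eta> (bracket p q) = bracket (\<eta> p) (\<eta> q))"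

definition lie_ideal :: "('a::field, 'x) assoc_poly set \<Rightarrow> bool" where
  "lie_ideal I \<longleftrightarrow> I \<subseteq> free_lie \<and> 0 \<in> I \<and> (\<forall>a\<in>I. \<forall>b\<in>I. a + b \<in> I)
     \<and> (\<forall>c. \<forall>a\<in>I. smult c a \<in> I) \<and> (\<forall>a\<in>I. \<forall>b\<in>free_lie. bracket a b \<in> I)"

definition lie_ideal_gen :: "('a::field, 'x) assoc_poly \<Rightarrow> ('a, 'x) assoc_poly set" where
  "lie_ideal_gen u = \<Inter>{I. lie_ideal I \<and> u \<in> I}"

end

theory Submission
  imports Defs
begin

text \<open>
  Let \<open>B\<close> be a base containing \<open>u\<close>. The substitution \<open>\<sigma>\<close> sending \<open>u\<close> to \<open>0\<close> and fixing the
  other elements of \<open>B\<close> extends, via the isomorphism between \<open>W\<close> and the free algebra on \<open>B\<close>,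
  to an endomorphism \<open>\<eta>\<close> with \<open>\<eta> u = 0\<close>. Since \<open>\<sigma> b \<equiv> b\<close> modulo \<open>\<langle>u\<rangle>\<close> for every \<open>b \<in> B\<close>,
  also \<open>\<eta> p \<equiv> p\<close> modulo \<open>\<langle>u\<rangle>\<close> for every \<open>p\<close>; hence \<open>\<eta> p = 0\<close> forces \<open>p \<in> \<langle>u\<rangle>\<close>.
  Conversely, the common kernel of all endomorphisms killing \<open>u\<close> is an ideal containing \<open>u\<close>.
\<close>

lemma lookup_smult: "Poly_Mapping.lookup (smult c p) k = c * Poly_Mapping.lookup p k"
  by (simp add: smult_def map.rep_eq when_def)

lemma smult_add: "smult c (p + q) = smult c p + smult c q"
  by (rule poly_mapping_eqI) (simp add: lookup_smult lookup_add algebra_simps)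

lemma smult_add_left: "smult (c + d) p = smult c p + smult d p"
  by (rule poly_mapping_eqI) (simp add: lookup_smult lookup_add algebra_simps)

lemma smult_0_left [simp]: "smult 0 p = 0"
  by (rule poly_mapping_eqI) (simp add: lookup_smult)

lemma smult_0_right [simp]: "smult c 0 = 0"
  by (rule poly_mapping_eqI) (simp add: lookup_smult)

lemma smult_one [simp]: "smult (1 :: 'a::semiring_1) p = p"
  by (rule poly_mapping_eqI) (simp add: lookup_smult)

lemma smult_smult: "smult c (smult d p) = smult (c * d) p"
  by (rule poly_mapping_eqI) (simp add: lookup_smult mult.assoc)

lemma smult_minus_one: "smult (-1 :: 'a::ring_1) p = - p"
  by (rule poly_mapping_eqI) (simp add: lookup_smult)

lemma smult_diff: "smult (c :: 'a::ring) (p - q) = smult c p - smult c q"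
  by (rule poly_mapping_eqI) (simp add: lookup_smult lookup_minus algebra_simps)

lemma keys_smult: "Poly_Mapping.keys (smult c p) \<subseteq> Poly_Mapping.keys p"
  by (auto simp: in_keys_iff lookup_smult)

lemma smult_sum: "smult c (sum f A) = (\<Sum>x\<in>A. smult c (f x))"
  by (induction A rule: infinite_finite_induct) (simp_all add: smult_add)

lemma sum_single_lookup:
  "(\<Sum>k\<in>Poly_Mapping.keys p. Poly_Mapping.single k (Poly_Mapping.lookup p k)) = p"
  by (rule poly_mapping_eqI) (simp add: lookup_sum lookup_single when_def in_keys_iff)

lemma smult_conv_mult_single: "smult c p = Poly_Mapping.single 0 c * (p :: 'm::monoid_add \<Rightarrow>\<^sub>0 'a::field)"
  by (simp add: smult_def mult_map_scale_conv_mult)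

lemma single_zero_commute:
  "Poly_Mapping.single 0 c * (p :: 'm::monoid_add \<Rightarrow>\<^sub>0 'a::field) = p * Poly_Mapping.single 0 c"
proof -
  let ?p = "\<lambda>k. Poly_Mapping.single k (Poly_Mapping.lookup p k)"
  have "Poly_Mapping.single 0 c * (\<Sum>k\<in>Poly_Mapping.keys p. ?p k) = (\<Sum>k\<in>Poly_Mapping.keys p. ?p k) * Poly_Mapping.single 0 c"
    by (simp add: sum_distrib_left sum_distrib_right mult_single mult.commute)
  then show ?thesis by (simp only: sum_single_lookup)
qed

lemma smult_mult_left: "smult c p * q = smult c (p * (q :: 'm::monoid_add \<Rightarrow>\<^sub>0 'a::field))"
  by (simp add: smult_conv_mult_single mult.assoc)

lemma smult_mult_right: "p * smult c q = smult c (p * (q :: 'm::monoid_add \<Rightarrow>\<^sub>0 'a::field))"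
  by (metis smult_conv_mult_single single_zero_commute mult.assoc)

definition alg_hom :: "(('k::monoid_add \<Rightarrow>\<^sub>0 'a::field) \<Rightarrow> ('m::monoid_add \<Rightarrow>\<^sub>0 'a)) \<Rightarrow> bool" where
  "alg_hom f \<longleftrightarrow> (\<forall>p q. f (p + q) = f p + f q) \<and> (\<forall>c p. f (smult c p) = smult c (f p))
     \<and> (\<forall>p q. f (p * q) = f p * f q) \<and> f 1 = 1"

definition subalgebra :: "('k::monoid_add \<Rightarrow>\<^sub>0 'a::field) set \<Rightarrow> bool" where
  "subalgebra D \<longleftrightarrow> 1 \<in> D \<and> (\<forall>P\<in>D. \<forall>Q\<in>D. P + Q \<in> D \<and> P * Q \<in> D) \<and> (\<forall>c. \<forall>P\<in>D. smult c P \<in> D)"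

lemma alg_end_iff_alg_hom: "alg_end \<eta> \<longleftrightarrow> alg_hom \<eta>"
  by (simp add: alg_end_def alg_hom_def)

lemma alg_hom_zero: "alg_hom f \<Longrightarrow> f 0 = 0"
  unfolding alg_hom_def by (metis add_0 add_left_cancel add.right_neutral)

lemma alg_hom_diff: "alg_hom f \<Longrightarrow> f (p - q) = f p - f q"
  unfolding alg_hom_def by (metis add_diff_cancel diff_add_cancel)

lemma alg_hom_comp: "alg_hom f \<Longrightarrow> alg_hom g \<Longrightarrow> alg_hom (g \<circ> f)"
  by (simp add: alg_hom_def)

lemma alg_hom_the_inv_into:
  assumes bij: "bij_betw f D UNIV" and D: "subalgebra D" and f: "alg_hom f"
  shows "alg_hom (the_inv_into D f)"
proof -
  let ?g = "the_inv_into D f"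
  have inj: "inj_on f D" using bij by (rule bij_betw_imp_inj_on)
  have gD: "?g p \<in> D" for p using bij_betw_the_inv_into[OF bij] by (auto dest: bij_betwE)
  have fg: "f (?g p) = p" for p using f_the_inv_into_f_bij_betw[OF bij] by simp
  have g_eq: "?g p = P" if "P \<in> D" "f P = p" for P p
    using the_inv_into_f_eq[OF inj that(2,1)] .
  show ?thesis
    unfolding alg_hom_def
    by (intro conjI allI g_eq) (use D f gD fg in \<open>auto simp: subalgebra_def alg_hom_def\<close>)
qed

lemma subalgebra_keys_submonoid:
  assumes "S 0" and "\<And>k l. S k \<Longrightarrow> S l \<Longrightarrow> S (k + l)"
  shows "subalgebra {P :: 'k::monoid_add \<Rightarrow>\<^sub>0 'a::field. \<forall>k\<in>Poly_Mapping.keys P. S k}"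
  unfolding subalgebra_def
  using assms keys_smult by (fastforce dest!: keys_add[THEN subsetD] keys_mult[THEN subsetD])

definition lin_ext :: "('k \<Rightarrow> ('m::monoid_add \<Rightarrow>\<^sub>0 'a::field)) \<Rightarrow> ('k \<Rightarrow>\<^sub>0 'a) \<Rightarrow> ('m \<Rightarrow>\<^sub>0 'a)" where
  "lin_ext mon P = (\<Sum>k\<in>Poly_Mapping.keys P. smult (Poly_Mapping.lookup P k) (mon k))"

lemma lin_ext_superset:
  assumes "finite S" "Poly_Mapping.keys P \<subseteq> S"
  shows "lin_ext mon P = (\<Sum>k\<in>S. smult (Poly_Mapping.lookup P k) (mon k))"
  unfolding lin_ext_def
  by (rule sum.mono_neutral_left) (use assms in \<open>auto simp: in_keys_iff\<close>)

lemma lin_ext_add: "lin_ext mon (P + Q) = lin_ext mon P + lin_ext mon Q"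
proof -
  let ?S = "Poly_Mapping.keys P \<union> Poly_Mapping.keys Q"
  have "lin_ext mon (P + Q) = (\<Sum>k\<in>?S. smult (Poly_Mapping.lookup (P + Q) k) (mon k))"
    by (rule lin_ext_superset) (auto dest: keys_add[THEN subsetD])
  also have "\<dots> = (\<Sum>k\<in>?S. smult (Poly_Mapping.lookup P k) (mon k)) + (\<Sum>k\<in>?S. smult (Poly_Mapping.lookup Q k) (mon k))"
    by (simp add: lookup_add smult_add_left sum.distrib)
  also have "\<dots> = lin_ext mon P + lin_ext mon Q"
    by (simp add: lin_ext_superset[symmetric])
  finally show ?thesis .
qed

lemma lin_ext_smult: "lin_ext mon (smult c P) = smult c (lin_ext mon P)"
proof -
  have "lin_ext mon (smult c P) = (\<Sum>k\<in>Poly_Mapping.keys P. smult (Poly_Mapping.lookup (smult c P) k) (mon k))"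
    by (rule lin_ext_superset) (auto simp: keys_smult[THEN subsetD])
  also have "\<dots> = smult c (lin_ext mon P)"
    by (simp add: lin_ext_def smult_sum lookup_smult smult_smult)
  finally show ?thesis .
qed

lemma lin_ext_zero [simp]: "lin_ext mon 0 = 0"
  by (simp add: lin_ext_def)

lemma lin_ext_single: "lin_ext mon (Poly_Mapping.single k c) = smult c (mon k)"
  by (simp add: lin_ext_def)

lemma lin_ext_sum: "lin_ext mon (sum f A) = (\<Sum>x\<in>A. lin_ext mon (f x))"
  by (induction A rule: infinite_finite_induct) (simp_all add: lin_ext_add)

lemma lin_ext_mult:
  assumes mon: "\<And>k l. mon (k + l) = mon k * mon l"
  shows "lin_ext mon (P * Q) = lin_ext mon P * lin_ext mon Q"
proof -
  let ?P = "\<lambda>k. Poly_Mapping.single k (Poly_Mapping.lookup P k)"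
  let ?Q = "\<lambda>k. Poly_Mapping.single k (Poly_Mapping.lookup Q k)"
  have "P * Q = (\<Sum>k\<in>Poly_Mapping.keys P. ?P k) * (\<Sum>l\<in>Poly_Mapping.keys Q. ?Q l)"
    by (simp only: sum_single_lookup)
  also have "\<dots> = (\<Sum>k\<in>Poly_Mapping.keys P. \<Sum>l\<in>Poly_Mapping.keys Q. ?P k * ?Q l)"
    by (rule sum_product)
  finally
  have "lin_ext mon (P * Q) = (\<Sum>k\<in>Poly_Mapping.keys P. \<Sum>l\<in>Poly_Mapping.keys Q.
       smult (Poly_Mapping.lookup P k) (mon k) * smult (Poly_Mapping.lookup Q l) (mon l))"
    by (simp add: lin_ext_sum mult_single lin_ext_single mon smult_mult_left smult_mult_right
        smult_smult mult.commute)
  also have "\<dots> = lin_ext mon P * lin_ext mon Q"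
    by (simp add: lin_ext_def sum_product)
  finally show ?thesis .
qed

lemma alg_hom_lin_ext:
  assumes "\<And>k l. mon (k + l) = mon k * mon l" and "mon 0 = 1"
  shows "alg_hom (lin_ext mon)"
  unfolding alg_hom_def using assms
  by (simp add: lin_ext_add lin_ext_smult lin_ext_mult) (simp add: lin_ext_def)

lemma ideal_sum:
  assumes "is_ideal I" "\<And>x. x \<in> A \<Longrightarrow> f x \<in> I"
  shows "sum f A \<in> I"
  using assms(2) by (induction A rule: infinite_finite_induct) (use assms(1) in \<open>auto simp: is_ideal_def\<close>)

lemma ideal_mult_cong:
  assumes "is_ideal I" "x - y \<in> I" "x' - y' \<in> I"
  shows "x * x' - y * y' \<in> I"
proof -
  have "x * x' - y * y' = (x - y) * x' + y * (x' - y')" by (simp add: algebra_simps)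
  then show ?thesis using assms unfolding is_ideal_def by metis
qed

lemma ideal_zero: "is_ideal I \<Longrightarrow> 0 \<in> I"
  by (simp add: is_ideal_def)

lemma ideal_prod_cong:
  assumes "is_ideal I" "\<And>x. x \<in> A \<Longrightarrow> f x - g x \<in> I"
  shows "prod f A - prod g A \<in> I"
  using assms(2)
  by (induction A rule: infinite_finite_induct) (simp_all add: ideal_zero ideal_mult_cong assms(1))

lemma ideal_power_cong:
  assumes "is_ideal I" "x - y \<in> I"
  shows "x ^ n - y ^ n \<in> I"
  by (induction n) (simp_all add: ideal_zero ideal_mult_cong assms)

lemma ideal_prod_list_cong:
  assumes "is_ideal I" "\<And>v. f v - g v \<in> I"
  shows "prod_list (map f xs) - prod_list (map g xs) \<in> I"
  by (induction xs) (simp_all add: ideal_zero ideal_mult_cong assms)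

lemma lin_ext_cong:
  assumes I: "is_ideal I" and "\<And>k. mon1 k - mon2 k \<in> I"
  shows "lin_ext mon1 P - lin_ext mon2 P \<in> I"
proof -
  have "lin_ext mon1 P - lin_ext mon2 P = (\<Sum>k\<in>Poly_Mapping.keys P. smult (Poly_Mapping.lookup P k) (mon1 k - mon2 k))"
    by (simp add: lin_ext_def smult_diff sum_subtractf)
  also have "\<dots> \<in> I"
    by (rule ideal_sum[OF I]) (use assms in \<open>auto simp: is_ideal_def\<close>)
  finally show ?thesis .
qed

lemma ideal_gen_ideal: "is_ideal (ideal_gen u)"
  unfolding ideal_gen_def is_ideal_def by blast

lemma ideal_gen_mem: "u \<in> ideal_gen u"
  unfolding ideal_gen_def by blast

lemma ideal_gen_least: "is_ideal I \<Longrightarrow> u \<in> I \<Longrightarrow> ideal_gen u \<subseteq> I"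
  unfolding ideal_gen_def by blast

lemma is_ideal_common_kernel:
  assumes "\<And>\<eta>. E \<eta> \<Longrightarrow> alg_hom \<eta>"
  shows "is_ideal {p. \<forall>\<eta>. E \<eta> \<longrightarrow> \<eta> p = 0}"
proof -
  have hom: "\<eta> 0 = 0" "\<eta> (a + b) = \<eta> a + \<eta> b" "\<eta> (smult c a) = smult c (\<eta> a)" "\<eta> (a * b) = \<eta> a * \<eta> b"
    if "E \<eta>" for \<eta> a b c
    using assms[OF that] alg_hom_zero by (simp_all add: alg_hom_def)
  then show ?thesis by (auto simp: is_ideal_def hom)
qed

definition eval_monom :: "('v \<Rightarrow> ('m::comm_monoid_add \<Rightarrow>\<^sub>0 'a::field)) \<Rightarrow> ('v \<Rightarrow>\<^sub>0 nat) \<Rightarrow> ('m \<Rightarrow>\<^sub>0 'a)" where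
  "eval_monom \<sigma> m = (\<Prod>v\<in>Poly_Mapping.keys m. \<sigma> v ^ Poly_Mapping.lookup m v)"

definition eval_word :: "('v \<Rightarrow> ('m::monoid_add \<Rightarrow>\<^sub>0 'a::field)) \<Rightarrow> 'v word \<Rightarrow> ('m \<Rightarrow>\<^sub>0 'a)" where
  "eval_word \<sigma> w = prod_list (map \<sigma> (letters w))"

lemma eval_comm_conv_lin_ext: "eval_comm \<sigma> = lin_ext (eval_monom \<sigma>)"
  by (simp add: eval_comm_def lin_ext_def eval_monom_def fun_eq_iff)

lemma eval_assoc_conv_lin_ext: "eval_assoc \<sigma> = lin_ext (eval_word \<sigma>)"
proof -
  have "foldr (\<lambda>v acc. \<sigma> v * acc) xs 1 = prod_list (map \<sigma> xs)" for xs
    by (induction xs) simp_all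
  then show ?thesis by (simp add: eval_assoc_def lin_ext_def eval_word_def fun_eq_iff)
qed

lemma eval_monom_superset:
  assumes "finite S" "Poly_Mapping.keys m \<subseteq> S"
  shows "eval_monom \<sigma> m = (\<Prod>v\<in>S. \<sigma> v ^ Poly_Mapping.lookup m v)"
  unfolding eval_monom_def
  by (rule prod.mono_neutral_left) (use assms in \<open>auto simp: in_keys_iff\<close>)

lemma eval_monom_add: "eval_monom \<sigma> (k + l) = eval_monom \<sigma> k * eval_monom \<sigma> l"
proof -
  let ?S = "Poly_Mapping.keys k \<union> Poly_Mapping.keys l"
  have "eval_monom \<sigma> (k + l) = (\<Prod>v\<in>?S. \<sigma> v ^ Poly_Mapping.lookup (k + l) v)"
    by (rule eval_monom_superset) (auto dest: keys_add[THEN subsetD])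
  also have "\<dots> = (\<Prod>v\<in>?S. \<sigma> v ^ Poly_Mapping.lookup k v) * (\<Prod>v\<in>?S. \<sigma> v ^ Poly_Mapping.lookup l v)"
    by (simp add: lookup_add power_add prod.distrib)
  also have "\<dots> = eval_monom \<sigma> k * eval_monom \<sigma> l"
    by (simp add: eval_monom_superset[symmetric])
  finally show ?thesis .
qed

lemma alg_hom_eval_comm: "alg_hom (eval_comm \<sigma>)"
  unfolding eval_comm_conv_lin_ext
  by (rule alg_hom_lin_ext[OF eval_monom_add]) (simp add: eval_monom_def)

lemma alg_hom_eval_assoc: "alg_hom (eval_assoc \<sigma>)"
  unfolding eval_assoc_conv_lin_ext
  by (rule alg_hom_lin_ext) (simp_all add: eval_word_def plus_word_def zero_word_def)

lemma eval_comm_cong: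
  assumes "is_ideal I" "\<And>v. \<sigma> v - \<tau> v \<in> I"
  shows "eval_comm \<sigma> P - eval_comm \<tau> P \<in> I"
  unfolding eval_comm_conv_lin_ext eval_monom_def
  by (intro lin_ext_cong ideal_prod_cong ideal_power_cong assms)

lemma eval_assoc_cong:
  assumes "is_ideal I" "\<And>v. \<sigma> v - \<tau> v \<in> I"
  shows "eval_assoc \<sigma> P - eval_assoc \<tau> P \<in> I"
  unfolding eval_assoc_conv_lin_ext eval_word_def
  by (intro lin_ext_cong ideal_prod_list_cong assms)

lemma eval_assoc_single_word: "eval_assoc \<sigma> (Poly_Mapping.single (Word [b]) 1) = \<sigma> b"
  by (simp add: eval_assoc_conv_lin_ext lin_ext_single eval_word_def)

text \<open>
  Here \<open>ev \<sigma>\<close> substitutes \<open>\<sigma>\<close> into a free algebra whose subalgebra \<open>D\<close> is mapped onto \<open>W\<close>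
  by \<open>ev id\<close>, and \<open>U\<close> is the variable standing for \<open>u\<close>.
\<close>

lemma common_kernel_eq_ideal_gen:
  fixes ev :: "(('m::monoid_add \<Rightarrow>\<^sub>0 'a::field) \<Rightarrow> ('m \<Rightarrow>\<^sub>0 'a)) \<Rightarrow> ('k::monoid_add \<Rightarrow>\<^sub>0 'a) \<Rightarrow> ('m \<Rightarrow>\<^sub>0 'a)"
  assumes bij: "bij_betw (ev id) D UNIV" and D: "subalgebra D"
    and hom: "\<And>\<sigma>. alg_hom (ev \<sigma>)"
    and cong: "\<And>\<sigma> \<tau> I P. is_ideal I \<Longrightarrow> (\<And>v. \<sigma> v - \<tau> v \<in> I) \<Longrightarrow> ev \<sigma> P - ev \<tau> P \<in> I"
    and U: "U \<in> D" "\<And>\<sigma>. ev \<sigma> U = \<sigma> u"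
  shows "{p. \<forall>\<eta>. alg_end \<eta> \<and> \<eta> u = 0 \<longrightarrow> \<eta> p = 0} = ideal_gen u"
proof
  show "ideal_gen u \<subseteq> {p. \<forall>\<eta>. alg_end \<eta> \<and> \<eta> u = 0 \<longrightarrow> \<eta> p = 0}"
    by (intro ideal_gen_least is_ideal_common_kernel[of "\<lambda>\<eta>. alg_end \<eta> \<and> \<eta> u = 0", simplified])
      (simp_all add: alg_end_iff_alg_hom)
  show "{p. \<forall>\<eta>. alg_end \<eta> \<and> \<eta> u = 0 \<longrightarrow> \<eta> p = 0} \<subseteq> ideal_gen u"
  proof
    fix p assume p: "p \<in> {p. \<forall>\<eta>. alg_end \<eta> \<and> \<eta> u = 0 \<longrightarrow> \<eta> p = 0}"
    define \<sigma> :: "('m \<Rightarrow>\<^sub>0 'a) \<Rightarrow> ('m \<Rightarrow>\<^sub>0 'a)" where "\<sigma> b = (if b = u then 0 else b)" for b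
    define \<eta> where "\<eta> = ev \<sigma> \<circ> the_inv_into D (ev id)"
    have "alg_end \<eta>"
      unfolding alg_end_iff_alg_hom \<eta>_def
      by (intro alg_hom_comp alg_hom_the_inv_into bij D hom)
    moreover have "\<eta> u = 0"
      using the_inv_into_f_eq[OF bij_betw_imp_inj_on[OF bij] _ U(1)] by (simp add: \<eta>_def U(2) \<sigma>_def)
    ultimately have "\<eta> p = 0" using p by blast
    have "ev id P - ev \<sigma> P \<in> ideal_gen u" for P
      by (rule cong[OF ideal_gen_ideal]) (simp add: \<sigma>_def ideal_gen_mem ideal_gen_ideal[unfolded is_ideal_def])
    from this[of "the_inv_into D (ev id) p"] show "p \<in> ideal_gen u"
      using \<open>\<eta> p = 0\<close> f_the_inv_into_f_bij_betw[OF bij] by (simp add: \<eta>_def)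
  qed
qed

lemma comm_common_kernel_eq_ideal_gen:
  assumes "comm_free_gen B" "u \<in> B"
  shows "{p. \<forall>\<eta>. alg_end \<eta> \<and> \<eta> u = 0 \<longrightarrow> \<eta> p = 0} = ideal_gen (u :: ('a::field, 'x) comm_poly)"
proof (rule common_kernel_eq_ideal_gen)
  show "bij_betw (eval_comm id) {P. \<forall>m\<in>Poly_Mapping.keys P. Poly_Mapping.keys m \<subseteq> B} UNIV"
    using assms(1) by (simp add: comm_free_gen_def)
  show "subalgebra {P. \<forall>m\<in>Poly_Mapping.keys P. Poly_Mapping.keys m \<subseteq> B}"
    by (rule subalgebra_keys_submonoid) (auto dest: keys_add[THEN subsetD])
  show "Poly_Mapping.single (Poly_Mapping.single u 1) 1 \<in> {P. \<forall>m\<in>Poly_Mapping.keys P. Poly_Mapping.keys m \<subseteq> B}"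
    using assms(2) by simp
  show "eval_comm \<sigma> (Poly_Mapping.single (Poly_Mapping.single u 1) 1) = \<sigma> u" for \<sigma>
    by (simp add: eval_comm_conv_lin_ext lin_ext_single eval_monom_def)
qed (simp_all add: alg_hom_eval_comm eval_comm_cong)

lemma assoc_common_kernel_eq_ideal_gen:
  assumes "assoc_free_gen B" "u \<in> B"
  shows "{p. \<forall>\<eta>. alg_end \<eta> \<and> \<eta> u = 0 \<longrightarrow> \<eta> p = 0} = ideal_gen (u :: ('a::field, 'x) assoc_poly)"
proof (rule common_kernel_eq_ideal_gen)
  show "bij_betw (eval_assoc id) {P. \<forall>w\<in>Poly_Mapping.keys P. set (letters w) \<subseteq> B} UNIV"
    using assms(1) by (simp add: assoc_free_gen_def)
  show "subalgebra {P. \<forall>w\<in>Poly_Mapping.keys P. set (letters w) \<subseteq> B}"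
    by (rule subalgebra_keys_submonoid) (auto simp: plus_word_def zero_word_def)
  show "Poly_Mapping.single (Word [u]) 1 \<in> {P. \<forall>w\<in>Poly_Mapping.keys P. set (letters w) \<subseteq> B}"
    using assms(2) by simp
qed (simp_all add: alg_hom_eval_assoc eval_assoc_cong eval_assoc_single_word)

lemma free_lie_zero: "0 \<in> free_lie"
  unfolding free_lie_def by (rule lie_closure.zero)

lemma free_lie_add: "p \<in> free_lie \<Longrightarrow> q \<in> free_lie \<Longrightarrow> p + q \<in> free_lie"
  unfolding free_lie_def by (rule lie_closure.add)

lemma free_lie_smult: "p \<in> free_lie \<Longrightarrow> smult c p \<in> free_lie"
  unfolding free_lie_def by (rule lie_closure.smult)

lemma free_lie_bracket: "p \<in> free_lie \<Longrightarrow> q \<in> free_lie \<Longrightarrow> bracket p q \<in> free_lie"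
  unfolding free_lie_def by (rule lie_closure.brk)

lemma lie_end_zero: "lie_end \<eta> \<Longrightarrow> \<eta> 0 = 0"
  unfolding lie_end_def using free_lie_zero by (metis add_0 add_left_cancel add.right_neutral)

lemma lie_ideal_free_lie: "lie_ideal free_lie"
  unfolding lie_ideal_def by (auto intro: free_lie_zero free_lie_add free_lie_smult free_lie_bracket)

lemma lie_ideal_gen_lie_ideal:
  assumes "u \<in> free_lie"
  shows "lie_ideal (lie_ideal_gen u)"
proof -
  have "lie_ideal_gen u \<subseteq> free_lie"
    unfolding lie_ideal_gen_def using lie_ideal_free_lie assms by blast
  then show ?thesis
    unfolding lie_ideal_def lie_ideal_gen_def by (simp add: lie_ideal_def)
qed

lemma lie_ideal_gen_mem: "u \<in> lie_ideal_gen u"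
  unfolding lie_ideal_gen_def by blast

lemma lie_ideal_gen_least: "lie_ideal I \<Longrightarrow> u \<in> I \<Longrightarrow> lie_ideal_gen u \<subseteq> I"
  unfolding lie_ideal_gen_def by blast

lemma bracket_zero_left [simp]: "bracket 0 q = 0"
  by (simp add: bracket_def)

lemma lie_ideal_common_kernel:
  assumes "\<And>\<eta>. E \<eta> \<Longrightarrow> lie_end \<eta>"
  shows "lie_ideal {p \<in> free_lie. \<forall>\<eta>. E \<eta> \<longrightarrow> \<eta> p = 0}"
proof -
  have zero: "\<eta> 0 = 0" if "E \<eta>" for \<eta>
    using assms[OF that] by (rule lie_end_zero)
  have hom: "\<eta> (a + b) = \<eta> a + \<eta> b" "\<eta> (smult c a) = smult c (\<eta> a)"
      "\<eta> (bracket a b) = bracket (\<eta> a) (\<eta> b)"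
    if "E \<eta>" "a \<in> free_lie" "b \<in> free_lie" for \<eta> a b c
    using assms[OF that(1)] that(2,3) by (simp_all add: lie_end_def)
  show ?thesis
    unfolding lie_ideal_def
    by (auto simp: zero hom intro: free_lie_zero free_lie_add free_lie_smult free_lie_bracket)
qed

lemma eval_assoc_zero: "eval_assoc \<sigma> 0 = 0"
  by (rule alg_hom_zero[OF alg_hom_eval_assoc])

lemma eval_assoc_add: "eval_assoc \<sigma> (P + Q) = eval_assoc \<sigma> P + eval_assoc \<sigma> Q"
  using alg_hom_eval_assoc[of \<sigma>] unfolding alg_hom_def by blast

lemma eval_assoc_smult: "eval_assoc \<sigma> (smult c P) = smult c (eval_assoc \<sigma> P)"
  using alg_hom_eval_assoc[of \<sigma>] unfolding alg_hom_def by blast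

lemma eval_assoc_bracket:
  "eval_assoc \<sigma> (bracket P Q) = bracket (eval_assoc \<sigma> P) (eval_assoc \<sigma> Q)"
  using alg_hom_eval_assoc[of \<sigma>] by (simp add: bracket_def alg_hom_diff) (simp add: alg_hom_def)

lemma eval_assoc_avar: "eval_assoc \<sigma> (avar b) = \<sigma> b"
  by (simp add: avar_def eval_assoc_single_word)

lemma eval_assoc_lie_closure:
  assumes "P \<in> lie_closure (avar ` B)" "\<And>b. b \<in> B \<Longrightarrow> \<sigma> b \<in> free_lie"
  shows "eval_assoc \<sigma> P \<in> free_lie"
  using assms(1)
  by (induction rule: lie_closure.induct)
    (auto simp: eval_assoc_avar eval_assoc_zero eval_assoc_add eval_assoc_smult eval_assoc_bracket assms(2)
      intro: free_lie_zero free_lie_add free_lie_smult free_lie_bracket)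

lemma eval_assoc_cong_lie_ideal:
  assumes I: "lie_ideal I" and "P \<in> lie_closure (avar ` B)"
    and \<sigma>\<tau>: "\<And>b. b \<in> B \<Longrightarrow> \<sigma> b - \<tau> b \<in> I"
    and lie: "\<And>b. b \<in> B \<Longrightarrow> \<sigma> b \<in> free_lie" "\<And>b. b \<in> B \<Longrightarrow> \<tau> b \<in> free_lie"
  shows "eval_assoc \<sigma> P - eval_assoc \<tau> P \<in> I"
  using assms(2)
proof (induction rule: lie_closure.induct)
  case (gen g)
  then show ?case using \<sigma>\<tau> by (auto simp: eval_assoc_avar)
next
  case zero
  then show ?case using I by (simp add: lie_ideal_def eval_assoc_zero)
next
  case (add p q)
  have "eval_assoc \<sigma> (p + q) - eval_assoc \<tau> (p + q)
      = (eval_assoc \<sigma> p - eval_assoc \<tau> p) + (eval_assoc \<sigma> q - eval_assoc \<tau> q)"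
    by (simp add: eval_assoc_add)
  then show ?case using add.IH I unfolding lie_ideal_def by metis
next
  case (smult p c)
  then show ?case using I by (simp add: lie_ideal_def eval_assoc_smult smult_diff[symmetric])
next
  case (brk p q)
  let ?d = "\<lambda>P. eval_assoc \<sigma> P - eval_assoc \<tau> P"
  have "?d (bracket p q) = bracket (?d p) (eval_assoc \<sigma> q) + smult (-1) (bracket (?d q) (eval_assoc \<tau> p))"
    by (simp only: eval_assoc_bracket) (simp add: bracket_def smult_minus_one algebra_simps)
  moreover have "eval_assoc \<sigma> q \<in> free_lie" "eval_assoc \<tau> p \<in> free_lie"
    using brk.hyps lie by (auto intro: eval_assoc_lie_closure)
  ultimately show ?case using brk.IH I unfolding lie_ideal_def by metis
qed

lemma lie_end_eval_assoc_comp_inverse: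
  fixes B :: "('a::field, 'x) assoc_poly set"
  assumes bij: "bij_betw (eval_assoc id) (lie_closure (avar ` B)) free_lie"
    and \<sigma>: "\<And>b. b \<in> B \<Longrightarrow> \<sigma> b \<in> free_lie"
  shows "lie_end (eval_assoc \<sigma> \<circ> the_inv_into (lie_closure (avar ` B)) (eval_assoc id))"
proof -
  let ?L = "lie_closure (avar ` B)" and ?g = "the_inv_into (lie_closure (avar ` B)) (eval_assoc id)"
  have inj: "inj_on (eval_assoc id) ?L" using bij by (rule bij_betw_imp_inj_on)
  have gL: "?g q \<in> ?L" if "q \<in> free_lie" for q
    using bij_betw_the_inv_into[OF bij] that by (auto dest: bij_betwE)
  have fg: "eval_assoc id (?g q) = q" if "q \<in> free_lie" for q
    using f_the_inv_into_f_bij_betw[OF bij that] .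
  have g_eq: "?g q = P" if "P \<in> ?L" "eval_assoc id P = q" for P q
    using the_inv_into_f_eq[OF inj that(2,1)] .
  show ?thesis
    unfolding lie_end_def
  proof (intro conjI ballI allI)
    fix q r :: "('a, 'x) assoc_poly" assume q: "q \<in> free_lie" and r: "r \<in> free_lie"
    show "(eval_assoc \<sigma> \<circ> ?g) q \<in> free_lie"
      using eval_assoc_lie_closure[OF gL[OF q] \<sigma>] by simp
    have "?g (q + r) = ?g q + ?g r"
      by (rule g_eq) (use gL fg q r in \<open>auto simp: eval_assoc_add intro: lie_closure.add\<close>)
    then show "(eval_assoc \<sigma> \<circ> ?g) (q + r) = (eval_assoc \<sigma> \<circ> ?g) q + (eval_assoc \<sigma> \<circ> ?g) r"
      by (simp add: eval_assoc_add)
    have "?g (bracket q r) = bracket (?g q) (?g r)"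
      by (rule g_eq) (use gL fg q r in \<open>auto simp: eval_assoc_bracket intro: lie_closure.brk\<close>)
    then show "(eval_assoc \<sigma> \<circ> ?g) (bracket q r) = bracket ((eval_assoc \<sigma> \<circ> ?g) q) ((eval_assoc \<sigma> \<circ> ?g) r)"
      by (simp add: eval_assoc_bracket)
  next
    fix c and q :: "('a, 'x) assoc_poly" assume q: "q \<in> free_lie"
    have "?g (smult c q) = smult c (?g q)"
      by (rule g_eq) (use gL fg q in \<open>auto simp: eval_assoc_smult intro: lie_closure.smult\<close>)
    then show "(eval_assoc \<sigma> \<circ> ?g) (smult c q) = smult c ((eval_assoc \<sigma> \<circ> ?g) q)"
      by (simp add: eval_assoc_smult)
  qed
qed

lemma lie_common_kernel_eq_lie_ideal_gen:
  assumes "lie_free_gen B" "u \<in> B"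
  shows "{p \<in> free_lie. \<forall>\<eta>. lie_end \<eta> \<and> \<eta> u = 0 \<longrightarrow> \<eta> p = 0} = lie_ideal_gen u"
proof
  have B: "B \<subseteq> free_lie" and bij: "bij_betw (eval_assoc id) (lie_closure (avar ` B)) free_lie"
    using assms(1) by (auto simp: lie_free_gen_def)
  then have u: "u \<in> free_lie" using assms(2) by blast
  show "lie_ideal_gen u \<subseteq> {p \<in> free_lie. \<forall>\<eta>. lie_end \<eta> \<and> \<eta> u = 0 \<longrightarrow> \<eta> p = 0}"
    by (intro lie_ideal_gen_least lie_ideal_common_kernel[of "\<lambda>\<eta>. lie_end \<eta> \<and> \<eta> u = 0", simplified])
      (simp_all add: u)
  show "{p \<in> free_lie. \<forall>\<eta>. lie_end \<eta> \<and> \<eta> u = 0 \<longrightarrow> \<eta> p = 0} \<subseteq> lie_ideal_gen u"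
  proof
    fix p assume p: "p \<in> {p \<in> free_lie. \<forall>\<eta>. lie_end \<eta> \<and> \<eta> u = 0 \<longrightarrow> \<eta> p = 0}"
    define \<sigma> where "\<sigma> b = (if b = u then 0 else b)" for b
    let ?g = "the_inv_into (lie_closure (avar ` B)) (eval_assoc id)"
    have \<sigma>_lie: "\<sigma> b \<in> free_lie" if "b \<in> B" for b
      using that B by (auto simp: \<sigma>_def free_lie_zero)
    have "lie_end (eval_assoc \<sigma> \<circ> ?g)"
      by (rule lie_end_eval_assoc_comp_inverse[OF bij \<sigma>_lie])
    moreover have "?g u = avar u"
      by (rule the_inv_into_f_eq[OF bij_betw_imp_inj_on[OF bij]])
        (simp_all add: eval_assoc_avar lie_closure.gen assms(2))
    then have "(eval_assoc \<sigma> \<circ> ?g) u = 0"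
      by (simp add: eval_assoc_avar \<sigma>_def)
    ultimately have "eval_assoc \<sigma> (?g p) = 0" using p by auto
    have "?g p \<in> lie_closure (avar ` B)"
      using bij_betw_the_inv_into[OF bij] p by (auto dest: bij_betwE)
    then have "eval_assoc id (?g p) - eval_assoc \<sigma> (?g p) \<in> lie_ideal_gen u"
      using lie_ideal_gen_lie_ideal[OF u] lie_ideal_gen_mem[of u] B \<sigma>_lie
      by (intro eval_assoc_cong_lie_ideal[where B = B]) (auto simp: \<sigma>_def lie_ideal_def)
    then show "p \<in> lie_ideal_gen u"
      using \<open>eval_assoc \<sigma> (?g p) = 0\<close> f_the_inv_into_f_bij_betw[OF bij] p by simp
  qed
qed

theorem lemma3p1:
  shows "(\<forall>u :: ('a::field, 'x::finite) comm_poly. (\<exists>B. comm_free_gen B \<and> u \<in> B) \<longrightarrow>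
            {p. \<forall>\<eta>. alg_end \<eta> \<and> \<eta> u = 0 \<longrightarrow> \<eta> p = 0} = ideal_gen u)
       \<and> (\<forall>u :: ('a, 'x) assoc_poly. (\<exists>B. assoc_free_gen B \<and> u \<in> B) \<longrightarrow>
            {p. \<forall>\<eta>. alg_end \<eta> \<and> \<eta> u = 0 \<longrightarrow> \<eta> p = 0} = ideal_gen u)
       \<and> (\<forall>u :: ('a, 'x) assoc_poly. (\<exists>B. lie_free_gen B \<and> u \<in> B) \<longrightarrow>
            {p \<in> free_lie. \<forall>\<eta>. lie_end \<eta> \<and> \<eta> u = 0 \<longrightarrow> \<eta> p = 0} = lie_ideal_gen u)"
  by (intro conjI allI impI; elim exE conjE)
    (rule comm_common_kernel_eq_ideal_gen assoc_common_kernel_eq_ideal_gen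
      lie_common_kernel_eq_lie_ideal_gen; assumption)+

end
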